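(* Let $\Sigma^*$ be an $n\times n$ positive definite matrix whose conditional independence structure is a tree $T^*$, with smallest eigenvalue $\lambda^*$, let $D^*$ be a diagonal matrix with nonnegative entries satisfying $D^*_{ii}<\lambda^*$ for all $i$, and let $\Sigma^o=\Sigma^*+D^*$. Then for every decomposition $\Sigma^o=\Sigma'+D'$ in which $\Sigma'$ is positive definite with smallest eigenvalue at least $\lambda^*$ and conditional independence structure a tree $T'$, and $D'$ is diagonal with nonnegative entries, we have $T'=T^*$.
   Context: For an $n\times n$ positive definite matrix $\Sigma$ with inverse $\Omega$, its conditional independence structure is the graph on $\{1,\dots,n\}$ with an edge $\{i,j\}$ ($i\neq j$) iff $\Omega_{ij}\neq 0$. *)

theory Defs
  imports "HOL-Analysis.Analysis"
begin

text \<open>Matrices are n x n real matrices indexed by a finite type 'n (vertex set = UNIV).\<close>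

definition pos_def_matrix :: "real^'n^'n \<Rightarrow> bool" where
  "pos_def_matrix A \<longleftrightarrow> transpose A = A \<and> (\<forall>x. x \<noteq> 0 \<longrightarrow> x \<bullet> (A *v x) > 0)"

definition is_eigenvalue :: "real^'n^'n \<Rightarrow> real \<Rightarrow> bool" where
  "is_eigenvalue A l \<longleftrightarrow> (\<exists>v. v \<noteq> 0 \<and> A *v v = l *\<^sub>R v)"

definition smallest_eigenvalue :: "real^'n^'n \<Rightarrow> real \<Rightarrow> bool" where
  "smallest_eigenvalue A l \<longleftrightarrow> is_eigenvalue A l \<and> (\<forall>m. is_eigenvalue A m \<longrightarrow> l \<le> m)"

definition diagonal_nonneg :: "real^'n^'n \<Rightarrow> bool" where
  "diagonal_nonneg D \<longleftrightarrow> (\<forall>i j. i \<noteq> j \<longrightarrow> D $ i $ j = 0) \<and> (\<forall>i. D $ i $ i \<ge> 0)"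

definition ci_graph :: "real^'n^'n \<Rightarrow> 'n \<Rightarrow> 'n \<Rightarrow> bool" where
  "ci_graph S i j \<longleftrightarrow> i \<noteq> j \<and> matrix_inv S $ i $ j \<noteq> 0"

definition walk :: "('a \<Rightarrow> 'a \<Rightarrow> bool) \<Rightarrow> 'a list \<Rightarrow> bool" where
  "walk E vs \<longleftrightarrow> vs \<noteq> [] \<and> (\<forall>k. Suc k < length vs \<longrightarrow> E (vs ! k) (vs ! Suc k))"

definition graph_connected :: "('a \<Rightarrow> 'a \<Rightarrow> bool) \<Rightarrow> bool" where
  "graph_connected E \<longleftrightarrow> (\<forall>u v. \<exists>vs. walk E vs \<and> hd vs = u \<and> last vs = v)"

definition has_cycle :: "('a \<Rightarrow> 'a \<Rightarrow> bool) \<Rightarrow> bool" where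
  "has_cycle E \<longleftrightarrow> (\<exists>vs. length vs \<ge> 3 \<and> distinct vs \<and> walk E vs \<and> E (last vs) (hd vs))"

definition is_tree :: "('a \<Rightarrow> 'a \<Rightarrow> bool) \<Rightarrow> bool" where
  "is_tree E \<longleftrightarrow> graph_connected E \<and> \<not> has_cycle E"

end

theory Submission
  imports Defs "HOL-Library.Transitive_Closure_Table"
begin

text \<open>
  Write \<open>E*\<close> and \<open>E'\<close> for the graphs of \<open>\<Sigma>*\<close> and \<open>\<Sigma>'\<close>. Off the diagonal \<open>\<Sigma>'\<close> agrees with
  \<open>\<Sigma>*\<close>, \<open>\<Sigma>' - \<lambda>* I\<close> is positive semidefinite, and \<open>\<Sigma>'\<^sub>i\<^sub>i < \<Sigma>*\<^sub>i\<^sub>i + \<lambda>*\<close>. For a positive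
  definite \<open>\<Sigma>\<close> two facts link entries of \<open>\<Sigma>\<close> to the graph of \<open>\<Omega> = \<Sigma>\<inverse>\<close>: if \<open>j\<close> separates
  \<open>a\<close> from \<open>b\<close> then \<open>\<Sigma>\<^sub>a\<^sub>b \<Sigma>\<^sub>j\<^sub>j = \<Sigma>\<^sub>a\<^sub>j \<Sigma>\<^sub>j\<^sub>b\<close>, and \<open>\<Sigma>\<^sub>a\<^sub>b \<noteq> 0\<close> on a bridge \<open>ab\<close>. Both hold
  because a vector \<open>w\<close> supported on one side of the cut, built from columns of \<open>\<Sigma>\<close>, has
  \<open>w\<^sup>T \<Omega> w = 0\<close>.

  Suppose an edge \<open>ab\<close> of the tree \<open>E*\<close> is missing from the tree \<open>E'\<close>. Then some \<open>j\<close>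
  separates \<open>a\<close> from \<open>b\<close> in \<open>E'\<close>, while in \<open>E*\<close> one endpoint, say \<open>b\<close>, separates \<open>a\<close> from
  \<open>j\<close>. The two product identities combine to \<open>\<Sigma>'\<^sub>j\<^sub>j \<Sigma>*\<^sub>b\<^sub>b = (\<Sigma>*\<^sub>b\<^sub>j)\<^sup>2\<close>, whereas the
  \<open>2 \<times> 2\<close> minor of \<open>\<Sigma>' - \<lambda>* I\<close> at \<open>b, j\<close> gives
  \<open>(\<Sigma>*\<^sub>b\<^sub>j)\<^sup>2 \<le> (\<Sigma>'\<^sub>b\<^sub>b - \<lambda>*) (\<Sigma>'\<^sub>j\<^sub>j - \<lambda>*) < \<Sigma>*\<^sub>b\<^sub>b \<Sigma>'\<^sub>j\<^sub>j\<close>. So \<open>E* \<subseteq> E'\<close>, and a tree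
  contained in another tree on the same vertices equals it.
\<close>

section \<open>Walks, paths and trees\<close>

lemma walk_singleton [simp]: "walk E [x]"
  by (simp add: walk_def)

lemma walk_Cons_Cons [simp]: "walk E (x # y # vs) \<longleftrightarrow> E x y \<and> walk E (y # vs)"
  by (simp add: walk_def All_less_Suc2)

lemma walk_mono: "walk E vs \<Longrightarrow> E \<le> F \<Longrightarrow> walk F vs"
  by (auto simp: walk_def)

lemma rtrancl_path_Nil_iff [simp]: "rtrancl_path E x [] y \<longleftrightarrow> x = y"
  by (subst rtrancl_path.simps) auto

lemma rtrancl_path_Cons_iff [simp]: "rtrancl_path E x (z # zs) y \<longleftrightarrow> E x z \<and> rtrancl_path E z zs y"
  by (subst rtrancl_path.simps) auto

lemma rtrancl_path_iff_walk:
  "rtrancl_path E x xs y \<longleftrightarrow> walk E (x # xs) \<and> last (x # xs) = y"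
  by (induction xs arbitrary: x) auto

lemma graph_connected_iff_rtranclp: "graph_connected E \<longleftrightarrow> (\<forall>u v. E\<^sup>*\<^sup>* u v)"
proof -
  have "(\<exists>vs. walk E vs \<and> hd vs = u \<and> last vs = v) \<longleftrightarrow> (\<exists>xs. rtrancl_path E u xs v)" for u v
    by (metis list.collapse list.sel(1) rtrancl_path_iff_walk walk_def)
  then show ?thesis
    by (simp add: graph_connected_def rtranclp_eq_rtrancl_path)
qed

definition remove_vertex :: "'a \<Rightarrow> ('a \<Rightarrow> 'a \<Rightarrow> bool) \<Rightarrow> 'a \<Rightarrow> 'a \<Rightarrow> bool" where
  "remove_vertex c E u v \<longleftrightarrow> E u v \<and> u \<noteq> c \<and> v \<noteq> c"

definition remove_edge :: "'a \<Rightarrow> 'a \<Rightarrow> ('a \<Rightarrow> 'a \<Rightarrow> bool) \<Rightarrow> 'a \<Rightarrow> 'a \<Rightarrow> bool" where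
  "remove_edge a b E u v \<longleftrightarrow> E u v \<and> {u, v} \<noteq> {a, b}"

lemma remove_vertex_le_remove_edge: "c \<in> {a, b} \<Longrightarrow> remove_vertex c E \<le> remove_edge a b E"
  by (auto simp: remove_vertex_def remove_edge_def doubleton_eq_iff)

lemma symp_remove_vertex: "symp E \<Longrightarrow> symp (remove_vertex c E)"
  by (auto simp: symp_def remove_vertex_def)

lemma symp_remove_edge: "symp E \<Longrightarrow> symp (remove_edge a b E)"
  by (auto simp: symp_def remove_edge_def insert_commute)

lemma rtranclp_remove_vertex_neq:
  "(remove_vertex c E)\<^sup>*\<^sup>* u v \<Longrightarrow> u \<noteq> c \<Longrightarrow> v \<noteq> c"
  by (induction rule: rtranclp.induct) (auto simp: remove_vertex_def)

lemma rtrancl_path_remove_vertex: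
  "rtrancl_path E x xs y \<Longrightarrow> c \<notin> set (x # xs) \<Longrightarrow> rtrancl_path (remove_vertex c E) x xs y"
  by (induction rule: rtrancl_path.induct) (auto simp: remove_vertex_def)

lemma tree_bridge:
  assumes "is_tree E" "symp E" "E a b" "a \<noteq> b"
  shows "\<not> (remove_edge a b E)\<^sup>*\<^sup>* a b"
proof
  assume "(remove_edge a b E)\<^sup>*\<^sup>* a b"
  then obtain xs where "rtrancl_path (remove_edge a b E) a xs b" and dist: "distinct (a # xs)"
    by (metis rtranclp_eq_rtrancl_path rtrancl_path_distinct)
  then have walk: "walk (remove_edge a b E) (a # xs)" and last: "last (a # xs) = b"
    by (simp_all add: rtrancl_path_iff_walk)
  have "length (a # xs) \<ge> 3"
  proof (cases xs)
    case (Cons y ys)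
    with walk last show ?thesis by (cases ys) (auto simp: remove_edge_def)
  qed (use last \<open>a \<noteq> b\<close> in simp)
  moreover have "walk E (a # xs)"
    using walk by (rule walk_mono) (auto simp: remove_edge_def)
  moreover have "E (last (a # xs)) (hd (a # xs))"
    using last \<open>symp E\<close> \<open>E a b\<close> by (simp add: sympD)
  ultimately have "has_cycle E"
    using dist unfolding has_cycle_def by blast
  with \<open>is_tree E\<close> show False
    by (simp add: is_tree_def)
qed

lemma tree_edge_separates:
  assumes "is_tree E" "symp E" "E a b" "a \<noteq> b"
  shows "\<not> ((remove_vertex b E)\<^sup>*\<^sup>* a x \<and> (remove_vertex a E)\<^sup>*\<^sup>* b x)"
proof
  let ?F = "remove_edge a b E"
  assume "(remove_vertex b E)\<^sup>*\<^sup>* a x \<and> (remove_vertex a E)\<^sup>*\<^sup>* b x"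
  then have "?F\<^sup>*\<^sup>* a x" "?F\<^sup>*\<^sup>* b x"
    by (auto intro: predicate2D[OF rtranclp_mono[OF remove_vertex_le_remove_edge]])
  moreover have "symp ?F\<^sup>*\<^sup>*"
    using \<open>symp E\<close> by (intro symp_rtranclp symp_remove_edge)
  ultimately have "?F\<^sup>*\<^sup>* a b"
    by (metis rtranclp_trans sympD)
  with tree_bridge[OF assms] show False
    by contradiction
qed

lemma tree_separator:
  assumes "is_tree E" "symp E" "a \<noteq> b" "\<not> E a b"
  obtains j where "j \<noteq> a" "j \<noteq> b" "\<not> (remove_vertex j E)\<^sup>*\<^sup>* a b"
proof -
  have "E\<^sup>*\<^sup>* a b"
    using \<open>is_tree E\<close> by (simp add: is_tree_def graph_connected_iff_rtranclp)
  then obtain xs where path: "rtrancl_path E a xs b" and dist: "distinct (a # xs)"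
    by (metis rtranclp_eq_rtrancl_path rtrancl_path_distinct)
  then obtain j rest where xs: "xs = j # rest"
    using \<open>a \<noteq> b\<close> by (cases xs) auto
  with path have "E a j" and "rtrancl_path E j rest b"
    by auto
  have "(remove_vertex a E)\<^sup>*\<^sup>* j b"
    using rtrancl_path_remove_vertex[OF \<open>rtrancl_path E j rest b\<close>] dist xs
    by (auto simp: rtranclp_eq_rtrancl_path)
  moreover have "j \<noteq> a"
    using dist xs by auto
  ultimately have "\<not> (remove_vertex j E)\<^sup>*\<^sup>* a b"
    using tree_edge_separates[OF \<open>is_tree E\<close> \<open>symp E\<close> \<open>E a j\<close>] by blast
  moreover have "j \<noteq> b"
    using \<open>E a j\<close> \<open>\<not> E a b\<close> by blast
  ultimately show thesis
    using \<open>j \<noteq> a\<close> that by blast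
qed

lemma tree_subgraph_eq:
  assumes "is_tree E" "is_tree F" "symp E" "symp F" "\<And>u. \<not> F u u" "E \<le> F"
  shows "F = E"
proof (intro ext iffI)
  fix a b
  assume "F a b"
  show "E a b"
  proof (rule ccontr)
    assume "\<not> E a b"
    have "E \<le> remove_edge a b F"
    proof (intro predicate2I)
      fix u v
      assume "E u v"
      then have "{u, v} \<noteq> {a, b}"
        using \<open>\<not> E a b\<close> \<open>symp E\<close> by (metis doubleton_eq_iff sympD)
      with \<open>E u v\<close> \<open>E \<le> F\<close> show "remove_edge a b F u v"
        by (auto simp: remove_edge_def)
    qed
    moreover have "E\<^sup>*\<^sup>* a b"
      using \<open>is_tree E\<close> by (simp add: is_tree_def graph_connected_iff_rtranclp)
    ultimately have "(remove_edge a b F)\<^sup>*\<^sup>* a b"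
      by (rule predicate2D[OF rtranclp_mono])
    moreover have "a \<noteq> b"
      using \<open>F a b\<close> assms(5) by blast
    ultimately show False
      using tree_bridge[OF \<open>is_tree F\<close> \<open>symp F\<close> \<open>F a b\<close>] by blast
  qed
qed (use \<open>E \<le> F\<close> in \<open>rule predicate2D\<close>)

section \<open>Positive definite matrices and their inverses\<close>

lemma transpose_eq_self_nth:
  assumes "transpose A = A"
  shows "A $ i $ j = A $ j $ i"
proof -
  have "A $ i $ j = transpose A $ i $ j"
    by (simp add: assms)
  then show ?thesis
    by (simp add: transpose_def)
qed

lemma pos_def_matrix_symmetric: "pos_def_matrix S \<Longrightarrow> S $ i $ j = S $ j $ i"
  by (simp add: pos_def_matrix_def transpose_eq_self_nth)

lemma pos_def_matrix_diag_pos: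
  assumes "pos_def_matrix S"
  shows "0 < S $ i $ i"
proof -
  have "axis i 1 \<bullet> (S *v axis i 1) > 0"
    using assms by (simp add: pos_def_matrix_def axis_eq_0_iff)
  then show ?thesis
    by (simp add: inner_axis' matrix_vector_mult_basis column_def)
qed

lemma pos_def_matrix_eigenvalue_pos:
  assumes "pos_def_matrix S" "is_eigenvalue S l"
  shows "0 < l"
proof -
  obtain v where "v \<noteq> 0" "S *v v = l *\<^sub>R v"
    using assms(2) by (auto simp: is_eigenvalue_def)
  with assms(1) have "0 < l * (v \<bullet> v)"
    by (auto simp: pos_def_matrix_def)
  then show ?thesis
    by (smt (verit) inner_ge_zero mult_nonpos_nonneg)
qed

lemma pos_def_matrix_quadratic_form_eq_0:
  "pos_def_matrix S \<Longrightarrow> x \<bullet> (S *v x) = 0 \<Longrightarrow> x = 0"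
  by (metis less_irrefl pos_def_matrix_def)

lemma pos_def_matrix_invertible:
  assumes "pos_def_matrix S"
  shows "invertible S"
proof -
  have "S *v x = 0 \<Longrightarrow> x = 0" for x
    using pos_def_matrix_quadratic_form_eq_0[OF assms] by simp
  then show ?thesis
    using invertible_left_inverse matrix_left_invertible_ker by blast
qed

lemma
  assumes "invertible A"
  shows matrix_inv_right: "A ** matrix_inv A = mat 1"
    and matrix_inv_left: "matrix_inv A ** A = mat 1"
proof -
  from assms have "\<exists>A'. A ** A' = mat 1 \<and> A' ** A = mat 1"
    by (simp add: invertible_def)
  then have "A ** matrix_inv A = mat 1 \<and> matrix_inv A ** A = mat 1"
    unfolding matrix_inv_def by (rule someI_ex)
  then show "A ** matrix_inv A = mat 1" and "matrix_inv A ** A = mat 1"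
    by auto
qed

lemma pos_def_matrix_inv:
  assumes "pos_def_matrix S"
  shows "pos_def_matrix (matrix_inv S)"
proof -
  let ?\<Omega> = "matrix_inv S"
  have S: "S ** ?\<Omega> = mat 1" "?\<Omega> ** S = mat 1" and sym: "transpose S = S"
    using matrix_inv_right matrix_inv_left pos_def_matrix_invertible assms
    by (auto simp: pos_def_matrix_def)
  have "transpose ?\<Omega> ** S = mat 1"
    by (metis S(1) matrix_transpose_mul sym transpose_mat)
  then have "transpose ?\<Omega> = ?\<Omega>"
    by (metis S(1) matrix_mul_assoc matrix_mul_lid matrix_mul_rid)
  moreover have "x \<bullet> (?\<Omega> *v x) > 0" if "x \<noteq> 0" for x
  proof -
    define y where "y = ?\<Omega> *v x"
    have x: "x = S *v y"
      by (simp add: y_def matrix_vector_mul_assoc S(1))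
    with that have "y \<noteq> 0"
      by auto
    with assms have "y \<bullet> (S *v y) > 0"
      by (simp add: pos_def_matrix_def)
    then show ?thesis
      by (metis x y_def dot_lmul_matrix inner_commute sym transpose_matrix_vector)
  qed
  ultimately show ?thesis
    by (simp add: pos_def_matrix_def)
qed

lemma matrix_vector_mult_supported:
  "(M *v (\<chi> k. if k \<in> A then f k else 0)) $ i = (\<Sum>k\<in>A. M $ i $ k * f k)"
  by (simp add: matrix_vector_mult_def if_distrib sum.If_cases)

lemma inner_supported:
  "(\<chi> k. if k \<in> A then f k else 0) \<bullet> (y :: real^'n) = (\<Sum>k\<in>A. f k * y $ k)"
  unfolding inner_vec_def by (simp add: if_distrib[where f = "\<lambda>x. x * _"] sum.If_cases)

lemma matrix_inv_row_sum:
  fixes S :: "real^'n^'n"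
  assumes "invertible S" "i \<in> A" "c \<notin> A" "j \<notin> A"
    and "\<And>l. l \<notin> A \<Longrightarrow> l \<noteq> j \<Longrightarrow> matrix_inv S $ i $ l = 0"
  shows "(\<Sum>l\<in>A. matrix_inv S $ i $ l * S $ l $ c) = - (matrix_inv S $ i $ j * S $ j $ c)"
proof -
  let ?\<Omega> = "matrix_inv S"
  have "(\<Sum>l\<in>- A. ?\<Omega> $ i $ l * S $ l $ c) = (\<Sum>l\<in>- A. if l = j then ?\<Omega> $ i $ j * S $ j $ c else 0)"
    using assms(5) by (intro sum.cong) auto
  also have "\<dots> = ?\<Omega> $ i $ j * S $ j $ c"
    using assms(4) by simp
  finally have outside: "(\<Sum>l\<in>- A. ?\<Omega> $ i $ l * S $ l $ c) = ?\<Omega> $ i $ j * S $ j $ c" .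
  have "0 = (?\<Omega> ** S) $ i $ c"
    using matrix_inv_left[OF assms(1)] assms(2,3) by (auto simp: mat_def)
  also have "\<dots> = (\<Sum>l\<in>A. ?\<Omega> $ i $ l * S $ l $ c) + (\<Sum>l\<in>- A. ?\<Omega> $ i $ l * S $ l $ c)"
    by (simp add: matrix_matrix_mult_def sum.subset_diff[of A UNIV] Compl_eq_Diff_UNIV add.commute)
  finally show ?thesis
    using outside by simp
qed

lemma pos_def_matrix_separation:
  fixes S :: "real^'n^'n"
  assumes "pos_def_matrix S" "a \<in> A" "b \<notin> A" "j \<notin> A"
    and "\<And>i l. i \<in> A \<Longrightarrow> l \<notin> A \<Longrightarrow> l \<noteq> j \<Longrightarrow> matrix_inv S $ i $ l = 0"
  shows "S $ a $ b * S $ j $ j = S $ a $ j * S $ j $ b"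
proof -
  let ?\<Omega> = "matrix_inv S"
  define w :: "real^'n" where "w = (\<chi> k. if k \<in> A then S $ k $ b * S $ j $ j - S $ k $ j * S $ j $ b else 0)"
  have \<Omega>w: "(?\<Omega> *v w) $ i = 0" if "i \<in> A" for i
  proof -
    have "(?\<Omega> *v w) $ i = (\<Sum>l\<in>A. ?\<Omega> $ i $ l * (S $ l $ b * S $ j $ j - S $ l $ j * S $ j $ b))"
      by (simp add: w_def matrix_vector_mult_supported)
    also have "\<dots> = (\<Sum>l\<in>A. ?\<Omega> $ i $ l * S $ l $ b) * S $ j $ j
        - (\<Sum>l\<in>A. ?\<Omega> $ i $ l * S $ l $ j) * S $ j $ b"
      by (simp add: right_diff_distrib sum_subtractf sum_distrib_right mult.assoc)
    also have "\<dots> = 0"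
      using matrix_inv_row_sum[OF pos_def_matrix_invertible[OF assms(1)] that _ assms(4) assms(5)[OF that]]
        assms(3,4) by simp
    finally show ?thesis .
  qed
  have "w \<bullet> (?\<Omega> *v w) = (\<Sum>i\<in>A. (S $ i $ b * S $ j $ j - S $ i $ j * S $ j $ b) * (?\<Omega> *v w) $ i)"
    unfolding w_def by (rule inner_supported)
  also have "\<dots> = 0"
    by (simp add: \<Omega>w)
  finally have "w \<bullet> (?\<Omega> *v w) = 0" .
  then have "w = 0"
    by (rule pos_def_matrix_quadratic_form_eq_0[OF pos_def_matrix_inv[OF assms(1)]])
  then have "w $ a = 0"
    by simp
  with \<open>a \<in> A\<close> show ?thesis
    by (simp add: w_def)
qed

lemma pos_def_matrix_bridge_entry_nonzero:
  fixes S :: "real^'n^'n"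
  assumes "pos_def_matrix S" "a \<in> A" "b \<notin> A" "matrix_inv S $ a $ b \<noteq> 0"
    and "\<And>i l. i \<in> A \<Longrightarrow> l \<notin> A \<Longrightarrow> (i, l) \<noteq> (a, b) \<Longrightarrow> matrix_inv S $ i $ l = 0"
  shows "S $ a $ b \<noteq> 0"
proof
  assume "S $ a $ b = 0"
  let ?\<Omega> = "matrix_inv S"
  define w :: "real^'n" where "w = (\<chi> k. if k \<in> A then S $ k $ b else 0)"
  have row_outside: "?\<Omega> $ i $ l = 0" if "i \<in> A" "l \<notin> A" "l \<noteq> b" for i l
    using assms(5) that by blast
  have \<Omega>w: "(?\<Omega> *v w) $ i = - (?\<Omega> $ i $ b * S $ b $ b)" if "i \<in> A" for i
    using matrix_inv_row_sum[OF pos_def_matrix_invertible[OF assms(1)] that assms(3) assms(3) row_outside[OF that]]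
    by (simp add: w_def matrix_vector_mult_supported)
  have "w \<bullet> (?\<Omega> *v w) = (\<Sum>i\<in>A. S $ i $ b * (?\<Omega> *v w) $ i)"
    unfolding w_def by (rule inner_supported)
  also have "\<dots> = - (\<Sum>i\<in>A. S $ i $ b * ?\<Omega> $ i $ b) * S $ b $ b"
    by (simp add: \<Omega>w sum_distrib_right sum_negf mult.assoc)
  also have "(\<Sum>i\<in>A. S $ i $ b * ?\<Omega> $ i $ b) = S $ a $ b * ?\<Omega> $ a $ b"
    using assms(2,3,5) by (subst sum.mono_neutral_right[of A "{a}"]) auto
  finally have "w \<bullet> (?\<Omega> *v w) = 0"
    using \<open>S $ a $ b = 0\<close> by simp
  then have "w = 0"
    by (rule pos_def_matrix_quadratic_form_eq_0[OF pos_def_matrix_inv[OF assms(1)]])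
  then have "(?\<Omega> *v w) $ a = 0"
    by simp
  with \<Omega>w[OF \<open>a \<in> A\<close>] assms(4) pos_def_matrix_diag_pos[OF assms(1), of b] show False
    by simp
qed

section \<open>Positive semidefinite matrices and the smallest eigenvalue\<close>

definition pos_semidef_matrix :: "real^'n^'n \<Rightarrow> bool" where
  "pos_semidef_matrix N \<longleftrightarrow> transpose N = N \<and> (\<forall>x. 0 \<le> x \<bullet> (N *v x))"

lemma pos_semidef_matrix_two_coords:
  fixes N :: "real^'n^'n"
  assumes "pos_semidef_matrix N" "i \<noteq> j"
  shows "0 \<le> \<alpha>\<^sup>2 * N $ i $ i + 2 * \<alpha> * \<beta> * N $ i $ j + \<beta>\<^sup>2 * N $ j $ j"
proof -
  define x :: "real^'n" where "x = \<alpha> *\<^sub>R axis i 1 + \<beta> *\<^sub>R axis j 1"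
  have "N $ j $ i = N $ i $ j"
    using assms(1) by (simp add: pos_semidef_matrix_def transpose_eq_self_nth)
  then have "x \<bullet> (N *v x) = \<alpha>\<^sup>2 * N $ i $ i + 2 * \<alpha> * \<beta> * N $ i $ j + \<beta>\<^sup>2 * N $ j $ j"
    using assms(2) by (simp add: x_def inner_add_left inner_add_right matrix_vector_right_distrib
        matrix_vector_mult_scaleR matrix_vector_mult_basis inner_axis' column_def
        power2_eq_square algebra_simps)
  with assms(1) show ?thesis
    by (metis pos_semidef_matrix_def)
qed

lemma pos_semidef_matrix_diag_nonneg:
  assumes "pos_semidef_matrix N"
  shows "0 \<le> N $ i $ i"
proof -
  have "0 \<le> axis i 1 \<bullet> (N *v axis i 1)"
    using assms by (simp add: pos_semidef_matrix_def)
  then show ?thesis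
    by (simp add: inner_axis' matrix_vector_mult_basis column_def)
qed

lemma pos_semidef_matrix_entry_sq_le:
  assumes "pos_semidef_matrix N"
  shows "(N $ i $ j)\<^sup>2 \<le> N $ i $ i * N $ j $ j"
proof (cases "i = j")
  case False
  let ?A = "N $ i $ i" and ?B = "N $ i $ j" and ?C = "N $ j $ j"
  note q = pos_semidef_matrix_two_coords[OF assms False]
  have "0 \<le> ?C * (?A * ?C - ?B\<^sup>2)"
    using q[of ?C "- ?B"] by (simp add: power2_eq_square algebra_simps)
  moreover have "0 \<le> ?C"
    using pos_semidef_matrix_diag_nonneg[OF assms] .
  ultimately show ?thesis
  proof (cases "?C = 0")
    case True
    have "?B = 0"
    proof (rule ccontr)
      assume "?B \<noteq> 0"
      with q[of 1 "- (?A + 1) / (2 * ?B)"] True show False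
        by (simp add: field_simps)
    qed
    with True show ?thesis
      by simp
  qed (simp add: zero_le_mult_iff)
qed (simp add: power2_eq_square)

lemma quadratic_nonneg_imp_linear_coeff_zero:
  fixes a b :: real
  assumes "\<And>t. 0 \<le> t * a + t\<^sup>2 * b"
  shows "a = 0"
proof (rule ccontr)
  assume "a \<noteq> 0"
  define c where "c = \<bar>b\<bar> + 1"
  have "c > 0" "b < c"
    by (simp_all add: c_def)
  define t where "t = - a / c"
  have "t * a + t\<^sup>2 * b = a\<^sup>2 / c\<^sup>2 * (b - c)"
    using \<open>c > 0\<close> by (simp add: t_def field_simps power2_eq_square)
  also have "\<dots> < 0"
    using \<open>a \<noteq> 0\<close> \<open>c > 0\<close> \<open>b < c\<close> by (intro mult_pos_neg) auto
  finally show False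
    using assms[of t] by simp
qed

lemma quadratic_form_min_on_sphere:
  fixes M :: "real^'n^'n"
  obtains v where "v \<bullet> v = 1" "\<And>x. (v \<bullet> (M *v v)) * (x \<bullet> x) \<le> x \<bullet> (M *v x)"
proof -
  define f where "f x = x \<bullet> (M *v x)" for x :: "real^'n"
  have "continuous_on (sphere 0 1) f"
    unfolding f_def by (intro continuous_on_inner continuous_on_id matrix_vector_mult_linear_continuous_on)
  moreover have "axis undefined 1 \<in> sphere (0::real^'n) 1"
    by (simp add: norm_axis_1)
  ultimately obtain v where v: "v \<in> sphere 0 1" and v_min: "\<And>y. y \<in> sphere 0 1 \<Longrightarrow> f v \<le> f y"
    using continuous_attains_inf[OF compact_sphere] by blast
  have "f v * (x \<bullet> x) \<le> f x" for x
  proof (cases "x = 0")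
    case False
    then have "f v \<le> f ((1 / norm x) *\<^sub>R x)"
      by (intro v_min) simp
    also have "\<dots> = f x / (norm x)\<^sup>2"
      by (simp add: f_def matrix_vector_mult_scaleR power2_eq_square divide_simps)
    finally show ?thesis
      using False by (simp add: divide_simps dot_square_norm)
  qed (simp add: f_def)
  moreover have "v \<bullet> v = 1"
    using v by (simp add: dot_square_norm)
  ultimately show thesis
    using that unfolding f_def by blast
qed

lemma quadratic_form_minimiser_eigenvector:
  fixes M :: "real^'n^'n"
  assumes "transpose M = M" "v \<bullet> v = 1"
    and min: "\<And>x. (v \<bullet> (M *v v)) * (x \<bullet> x) \<le> x \<bullet> (M *v x)"
  shows "M *v v = (v \<bullet> (M *v v)) *\<^sub>R v"
proof -
  define \<mu> where "\<mu> = v \<bullet> (M *v v)"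
  define g where "g x = x \<bullet> (M *v x) - \<mu> * (x \<bullet> x)" for x
  define u where "u = M *v v - \<mu> *\<^sub>R v"
  \<comment> \<open>Perturbing the minimiser \<open>v\<close> in the direction of the residual \<open>u\<close> shows \<open>u = 0\<close>.\<close>
  have "g (v + t *\<^sub>R u) = t * (2 * (u \<bullet> u)) + t\<^sup>2 * g u" for t
  proof -
    have "v \<bullet> (M *v u) = u \<bullet> (M *v v)"
      by (metis assms(1) dot_lmul_matrix inner_commute transpose_matrix_vector)
    then have quad: "(v + t *\<^sub>R u) \<bullet> (M *v (v + t *\<^sub>R u))
        = \<mu> + 2 * t * (u \<bullet> (M *v v)) + t\<^sup>2 * (u \<bullet> (M *v u))"
      by (simp add: \<mu>_def matrix_vector_right_distrib matrix_vector_mult_scaleR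
          inner_add_left inner_add_right power2_eq_square algebra_simps)
    have norm: "(v + t *\<^sub>R u) \<bullet> (v + t *\<^sub>R u) = 1 + 2 * t * (u \<bullet> v) + t\<^sup>2 * (u \<bullet> u)"
      using assms(2) by (simp add: inner_add_left inner_add_right inner_commute[of v u] power2_eq_square algebra_simps)
    have "g (v + t *\<^sub>R u) = t * (2 * (u \<bullet> (M *v v) - \<mu> * (u \<bullet> v))) + t\<^sup>2 * g u"
      unfolding g_def quad norm by (simp add: algebra_simps)
    also have "u \<bullet> (M *v v) - \<mu> * (u \<bullet> v) = u \<bullet> u"
      by (simp add: u_def inner_diff_right)
    finally show ?thesis .
  qed
  moreover have "0 \<le> g x" for x
    using min[of x] by (simp add: g_def \<mu>_def)
  ultimately have "2 * (u \<bullet> u) = 0"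
    by (intro quadratic_nonneg_imp_linear_coeff_zero[of _ "g u"]) metis
  then show ?thesis
    by (simp add: u_def \<mu>_def)
qed

lemma symmetric_matrix_eigenvalue_lower_bound:
  fixes M :: "real^'n^'n"
  assumes "transpose M = M"
  obtains \<mu> where "is_eigenvalue M \<mu>" "\<And>x. \<mu> * (x \<bullet> x) \<le> x \<bullet> (M *v x)"
proof -
  obtain v where "v \<bullet> v = 1" and min: "\<And>x. (v \<bullet> (M *v v)) * (x \<bullet> x) \<le> x \<bullet> (M *v x)"
    using quadratic_form_min_on_sphere[of M] by blast
  moreover have "v \<noteq> 0"
    using \<open>v \<bullet> v = 1\<close> by auto
  ultimately have "is_eigenvalue M (v \<bullet> (M *v v))"
    unfolding is_eigenvalue_def using quadratic_form_minimiser_eigenvector[OF assms] by blast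
  with min show thesis
    using that by blast
qed

lemma pos_semidef_matrix_shift_by_eigenvalue_bound:
  fixes M :: "real^'n^'n"
  assumes "transpose M = M" "\<And>m. is_eigenvalue M m \<Longrightarrow> l \<le> m"
  shows "pos_semidef_matrix (M - l *\<^sub>R mat 1)"
proof -
  obtain \<mu> where "is_eigenvalue M \<mu>" and \<mu>: "\<And>x. \<mu> * (x \<bullet> x) \<le> x \<bullet> (M *v x)"
    using symmetric_matrix_eigenvalue_lower_bound[OF assms(1)] by blast
  have "l * (x \<bullet> x) \<le> x \<bullet> (M *v x)" for x
    using assms(2)[OF \<open>is_eigenvalue M \<mu>\<close>] \<mu>[of x] by (smt (verit) inner_ge_zero mult_right_mono)
  moreover have "transpose (M - l *\<^sub>R mat 1) = M - l *\<^sub>R mat 1"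
    using transpose_eq_self_nth[OF assms(1)] by (simp add: vec_eq_iff transpose_def mat_def)
  ultimately show ?thesis
    by (simp add: pos_semidef_matrix_def matrix_vector_mult_diff_rdistrib inner_diff_right
        flip: scaleR_matrix_vector_assoc)
qed

section \<open>Conditional independence graphs\<close>

lemma ci_graph_irrefl: "\<not> ci_graph S u u"
  by (simp add: ci_graph_def)

lemma ci_graph_symp: "pos_def_matrix S \<Longrightarrow> symp (ci_graph S)"
  by (auto simp: symp_def ci_graph_def pos_def_matrix_symmetric[OF pos_def_matrix_inv])

lemma ci_graph_separation:
  assumes "pos_def_matrix S" "a \<noteq> j" "\<not> (remove_vertex j (ci_graph S))\<^sup>*\<^sup>* a b"
  shows "S $ a $ b * S $ j $ j = S $ a $ j * S $ j $ b"
proof -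
  let ?R = "remove_vertex j (ci_graph S)"
  show ?thesis
  proof (rule pos_def_matrix_separation[OF assms(1), of a "{v. ?R\<^sup>*\<^sup>* a v}"])
    show "j \<notin> {v. ?R\<^sup>*\<^sup>* a v}"
      using rtranclp_remove_vertex_neq assms(2) by fastforce
    fix i l
    assume i: "i \<in> {v. ?R\<^sup>*\<^sup>* a v}" and l: "l \<notin> {v. ?R\<^sup>*\<^sup>* a v}" "l \<noteq> j"
    show "matrix_inv S $ i $ l = 0"
    proof (rule ccontr)
      assume "matrix_inv S $ i $ l \<noteq> 0"
      moreover have "i \<noteq> l" "i \<noteq> j"
        using i l rtranclp_remove_vertex_neq[of j _ a i] assms(2) by auto
      ultimately have "?R i l"
        using l by (simp add: remove_vertex_def ci_graph_def)
      with i l show False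
        by (auto intro: rtranclp.rtrancl_into_rtrancl)
    qed
  qed (use assms(3) in auto)
qed

lemma ci_graph_bridge_entry_nonzero:
  assumes "pos_def_matrix S" "ci_graph S a b" "\<not> (remove_edge a b (ci_graph S))\<^sup>*\<^sup>* a b"
  shows "S $ a $ b \<noteq> 0"
proof -
  let ?R = "remove_edge a b (ci_graph S)"
  show ?thesis
  proof (rule pos_def_matrix_bridge_entry_nonzero[OF assms(1), of a "{v. ?R\<^sup>*\<^sup>* a v}"])
    show "matrix_inv S $ a $ b \<noteq> 0"
      using assms(2) by (simp add: ci_graph_def)
    fix i l
    assume i: "i \<in> {v. ?R\<^sup>*\<^sup>* a v}" and l: "l \<notin> {v. ?R\<^sup>*\<^sup>* a v}" and "(i, l) \<noteq> (a, b)"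
    show "matrix_inv S $ i $ l = 0"
    proof (rule ccontr)
      assume "matrix_inv S $ i $ l \<noteq> 0"
      moreover have "i \<noteq> l" "i \<noteq> b"
        using i l assms(3) by auto
      ultimately have "?R i l"
        using \<open>(i, l) \<noteq> (a, b)\<close> by (auto simp: remove_edge_def ci_graph_def doubleton_eq_iff)
      with i l show False
        by (auto intro: rtranclp.rtrancl_into_rtrancl)
    qed
  qed (use assms(3) in auto)
qed

lemma ci_graph_separations_incompatible:
  fixes S S' :: "real^'n^'n" and l :: real
  assumes pd: "pos_def_matrix S" "pos_def_matrix S'"
    and off_diag: "\<And>i k. i \<noteq> k \<Longrightarrow> S' $ i $ k = S $ i $ k"
    and diag: "\<And>i. S' $ i $ i < S $ i $ i + l"
    and "0 < l" and psd: "pos_semidef_matrix (S' - l *\<^sub>R mat 1)"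
    and "a \<noteq> b" "j \<noteq> a" "j \<noteq> b" "S $ a $ b \<noteq> 0"
    and "\<not> (remove_vertex j (ci_graph S'))\<^sup>*\<^sup>* a b"
    and "\<not> (remove_vertex b (ci_graph S))\<^sup>*\<^sup>* a j"
  shows False
proof -
  have "S' $ a $ b * S' $ j $ j = S' $ a $ j * S' $ j $ b"
    using ci_graph_separation[OF pd(2) not_sym[OF \<open>j \<noteq> a\<close>]] assms(11) .
  then have sep': "S $ a $ b * S' $ j $ j = S $ a $ j * S $ j $ b"
    using \<open>a \<noteq> b\<close> \<open>j \<noteq> a\<close> \<open>j \<noteq> b\<close> by (simp add: off_diag eq_commute[of j])
  have sep: "S $ a $ j * S $ b $ b = S $ a $ b * S $ b $ j"
    using ci_graph_separation[OF pd(1) \<open>a \<noteq> b\<close>] assms(12) .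
  have "S $ a $ b * (S' $ j $ j * S $ b $ b) = S $ a $ j * S $ b $ b * S $ j $ b"
    using sep' by (simp add: ac_simps)
  also have "\<dots> = S $ a $ b * (S $ b $ j)\<^sup>2"
    using sep pos_def_matrix_symmetric[OF pd(1), of j b] by (simp add: power2_eq_square ac_simps)
  finally have "(S $ b $ j)\<^sup>2 = S $ b $ b * S' $ j $ j"
    using \<open>S $ a $ b \<noteq> 0\<close> by (simp add: mult.commute)
  moreover have "(S $ b $ j)\<^sup>2 < S $ b $ b * S' $ j $ j"
  proof -
    let ?N = "S' - l *\<^sub>R mat 1"
    have "(S $ b $ j)\<^sup>2 = (?N $ b $ j)\<^sup>2"
      using off_diag \<open>j \<noteq> b\<close> by (simp add: mat_def)
    also have "\<dots> \<le> ?N $ b $ b * ?N $ j $ j"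
      by (rule pos_semidef_matrix_entry_sq_le[OF psd])
    also have "\<dots> \<le> S $ b $ b * (S' $ j $ j - l)"
      using diag[of b] pos_semidef_matrix_diag_nonneg[OF psd, of j] by (simp add: mat_def mult_right_mono)
    also have "\<dots> < S $ b $ b * S' $ j $ j"
      using pos_def_matrix_diag_pos[OF pd(1)] \<open>0 < l\<close> by (simp add: algebra_simps)
    finally show ?thesis .
  qed
  ultimately show False
    by simp
qed

lemma ci_tree_edge_persists:
  fixes S S' :: "real^'n^'n" and l :: real
  assumes pd: "pos_def_matrix S" "pos_def_matrix S'"
    and trees: "is_tree (ci_graph S)" "is_tree (ci_graph S')"
    and off_diag: "\<And>i k. i \<noteq> k \<Longrightarrow> S' $ i $ k = S $ i $ k"
    and diag: "\<And>i. S' $ i $ i < S $ i $ i + l"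
    and "0 < l" and psd: "pos_semidef_matrix (S' - l *\<^sub>R mat 1)"
    and edge: "ci_graph S a b"
  shows "ci_graph S' a b"
proof (rule ccontr)
  let ?E = "ci_graph S" and ?E' = "ci_graph S'"
  note incompatible = ci_graph_separations_incompatible[OF pd off_diag diag \<open>0 < l\<close> psd]
  assume "\<not> ?E' a b"
  have "a \<noteq> b"
    using edge ci_graph_irrefl by metis
  obtain j where "j \<noteq> a" "j \<noteq> b" and separated: "\<not> (remove_vertex j ?E')\<^sup>*\<^sup>* a b"
    using tree_separator[OF trees(2) ci_graph_symp[OF pd(2)] \<open>a \<noteq> b\<close> \<open>\<not> ?E' a b\<close>] .
  have "S $ a $ b \<noteq> 0"
    using ci_graph_bridge_entry_nonzero[OF pd(1) edge
        tree_bridge[OF trees(1) ci_graph_symp[OF pd(1)] edge \<open>a \<noteq> b\<close>]] .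
  moreover have "\<not> (remove_vertex j ?E')\<^sup>*\<^sup>* b a"
    using separated ci_graph_symp[OF pd(2)] by (metis symp_remove_vertex symp_rtranclp sympD)
  moreover have "\<not> ((remove_vertex b ?E)\<^sup>*\<^sup>* a j \<and> (remove_vertex a ?E)\<^sup>*\<^sup>* b j)"
    using tree_edge_separates[OF trees(1) ci_graph_symp[OF pd(1)] edge \<open>a \<noteq> b\<close>] .
  ultimately show False
    using incompatible[of a b j] incompatible[of b a j] separated \<open>a \<noteq> b\<close> \<open>j \<noteq> a\<close> \<open>j \<noteq> b\<close>
      pos_def_matrix_symmetric[OF pd(1), of a b] by fastforce
qed

theorem mainTheorem6:
  fixes Sstar Dstar So :: "real^'n^'n" and lstar :: real
  assumes "pos_def_matrix Sstar"
    and "is_tree (ci_graph Sstar)"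
    and "smallest_eigenvalue Sstar lstar"
    and "diagonal_nonneg Dstar"
    and "\<forall>i. Dstar $ i $ i < lstar"
    and "So = Sstar + Dstar"
  shows "\<forall>S' D'. So = S' + D' \<and> pos_def_matrix S'
           \<and> (\<forall>m. is_eigenvalue S' m \<longrightarrow> lstar \<le> m)
           \<and> is_tree (ci_graph S') \<and> diagonal_nonneg D'
           \<longrightarrow> ci_graph S' = ci_graph Sstar"
proof (intro allI impI, elim conjE)
  fix S' D' :: "real^'n^'n"
  assume "So = S' + D'" "pos_def_matrix S'" "\<forall>m. is_eigenvalue S' m \<longrightarrow> lstar \<le> m"
    "is_tree (ci_graph S')" "diagonal_nonneg D'"
  have S': "S' = Sstar + Dstar - D'"
    using \<open>So = S' + D'\<close> assms(6) by (simp add: algebra_simps)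
  have "0 < lstar"
    using assms(1,3) pos_def_matrix_eigenvalue_pos by (auto simp: smallest_eigenvalue_def)
  moreover have "pos_semidef_matrix (S' - lstar *\<^sub>R mat 1)"
    using \<open>pos_def_matrix S'\<close> \<open>\<forall>m. is_eigenvalue S' m \<longrightarrow> lstar \<le> m\<close>
    by (intro pos_semidef_matrix_shift_by_eigenvalue_bound) (auto simp: pos_def_matrix_def)
  moreover have "S' $ i $ k = Sstar $ i $ k" if "i \<noteq> k" for i k
    using that assms(4) \<open>diagonal_nonneg D'\<close> by (simp add: S' diagonal_nonneg_def)
  moreover have "S' $ i $ i < Sstar $ i $ i + lstar" for i
    using assms(5) \<open>diagonal_nonneg D'\<close> unfolding diagonal_nonneg_def by (simp add: S') (smt (verit))
  ultimately have "ci_graph Sstar \<le> ci_graph S'"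
    using ci_tree_edge_persists[OF assms(1) \<open>pos_def_matrix S'\<close> assms(2) \<open>is_tree (ci_graph S')\<close>] by blast
  then show "ci_graph S' = ci_graph Sstar"
    using tree_subgraph_eq assms(1,2) \<open>pos_def_matrix S'\<close> \<open>is_tree (ci_graph S')\<close> ci_graph_symp ci_graph_irrefl
    by metis
qed

end
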